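(* Let $n\ge2$, $\preceq$ an admissible order on $L([0,1])$, $G\colon L([0,1])^n\to L([0,1])$ non-decreasing with $G(\mathbf0,\dots,\mathbf0)=\mathbf0$ and $G(\mathbf1,\dots,\mathbf1)=\mathbf1$, and $F\colon L([0,1])^2\to L([0,1])$ non-decreasing in the first variable with $F(\mathbf0,Y)=\mathbf0$ and $F(\mathbf1,Y)=\mathbf1$ for all $Y\in L([0,1])$. Then the IV Sugeno-like $FG$-functional $\mathbf S_m^{F,G}$ is an $n$-dimensional IV aggregation function w.r.t. $\preceq$ for every symmetric IV fuzzy measure $m$.
   Context: $N=\{1,\dots,n\}$. $L([0,1])=\{[a,b]:0\le a\le b\le1\}$, $\mathbf0=[0,0]$, $\mathbf1=[1,1]$. An admissible order $\preceq$ is a total order on $L([0,1])$ with $[a,b]\preceq[c,d]$ whenever $a\le c$, $b\le d$. Monotonicity is w.r.t. $\preceq$. An $n$-dimensional IV aggregation function w.r.t. $\preceq$ is $M\colon L([0,1])^n\to L([0,1])$ with $M(\mathbf0,\dots,\mathbf0)=\mathbf0$, $M(\mathbf1,\dots,\mathbf1)=\mathbf1$, non-decreasing in each component w.r.t. $\preceq$. An IV fuzzy measure w.r.t. $\preceq$ is $m\colon2^N\to L([0,1])$, $m(\emptyset)=\mathbf0$, $m(N)=\mathbf1$, $m(A)\preceq m(B)$ for $A\subseteq B$; symmetric if $m(A)=m(B)$ whenever $|A|=|B|$. For a permutation $\sigma$, $E_{\sigma(i)}=\{\sigma(i),\dots,\sigma(n)\}$. $\mathbf S_m^{F,G}(X_1,\dots,X_n)=G\big(F(X_{\sigma(1)},m(E_{\sigma(1)})),\dots,F(X_{\sigma(n)},m(E_{\sigma(n)}))\big)$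 with $\sigma$ any permutation such that $X_{\sigma(1)}\preceq\dots\preceq X_{\sigma(n)}$ (independent of the choice of $\sigma$ for symmetric $m$). *)

theory Defs
  imports Complex_Main "HOL-Library.FuncSet"
begin

text \<open>Closed subintervals [a,b] of [0,1] are represented as pairs (a,b).\<close>
type_synonym ival = "real \<times> real"

definition LI :: "ival set" where
  "LI = {(a, b). 0 \<le> a \<and> a \<le> b \<and> b \<le> 1}"

definition ival0 :: ival where "ival0 = (0, 0)"
definition ival1 :: ival where "ival1 = (1, 1)"

definition admissible_order :: "(ival \<Rightarrow> ival \<Rightarrow> bool) \<Rightarrow> bool" where
  "admissible_order le \<longleftrightarrow>
     (\<forall>x\<in>LI. le x x) \<and>
     (\<forall>x\<in>LI. \<forall>y\<in>LI. le x y \<and> le y x \<longrightarrow> x = y) \<and>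
     (\<forall>x\<in>LI. \<forall>y\<in>LI. \<forall>z\<in>LI. le x y \<and> le y z \<longrightarrow> le x z) \<and>
     (\<forall>x\<in>LI. \<forall>y\<in>LI. le x y \<or> le y x) \<and>
     (\<forall>a b c d. (a, b) \<in> LI \<and> (c, d) \<in> LI \<and> a \<le> c \<and> b \<le> d \<longrightarrow> le (a, b) (c, d))"

text \<open>Elements of L([0,1])^n are extensional functions on {1..n}.\<close>
definition ivecs :: "nat \<Rightarrow> (nat \<Rightarrow> ival) set" where
  "ivecs n = {1..n} \<rightarrow>\<^sub>E LI"

definition const_ivec :: "nat \<Rightarrow> ival \<Rightarrow> (nat \<Rightarrow> ival)" where
  "const_ivec n c = (\<lambda>i\<in>{1..n}. c)"

definition iv_aggregation :: "(ival \<Rightarrow> ival \<Rightarrow> bool) \<Rightarrow> nat \<Rightarrow> ((nat \<Rightarrow> ival) \<Rightarrow> ival) \<Rightarrow> bool" where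
  "iv_aggregation le n M \<longleftrightarrow>
     (\<forall>X\<in>ivecs n. M X \<in> LI) \<and>
     M (const_ivec n ival0) = ival0 \<and>
     M (const_ivec n ival1) = ival1 \<and>
     (\<forall>X\<in>ivecs n. \<forall>Y\<in>ivecs n. (\<forall>i\<in>{1..n}. le (X i) (Y i)) \<longrightarrow> le (M X) (M Y))"

definition iv_fuzzy_measure :: "(ival \<Rightarrow> ival \<Rightarrow> bool) \<Rightarrow> nat \<Rightarrow> (nat set \<Rightarrow> ival) \<Rightarrow> bool" where
  "iv_fuzzy_measure le n m \<longleftrightarrow>
     (\<forall>A. A \<subseteq> {1..n} \<longrightarrow> m A \<in> LI) \<and>
     m {} = ival0 \<and> m {1..n} = ival1 \<and>
     (\<forall>A B. A \<subseteq> B \<and> B \<subseteq> {1..n} \<longrightarrow> le (m A) (m B))"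

definition symmetric_measure :: "nat \<Rightarrow> (nat set \<Rightarrow> ival) \<Rightarrow> bool" where
  "symmetric_measure n m \<longleftrightarrow>
     (\<forall>A B. A \<subseteq> {1..n} \<and> B \<subseteq> {1..n} \<and> card A = card B \<longrightarrow> m A = m B)"

definition sorting_perm :: "(ival \<Rightarrow> ival \<Rightarrow> bool) \<Rightarrow> nat \<Rightarrow> (nat \<Rightarrow> ival) \<Rightarrow> (nat \<Rightarrow> nat) \<Rightarrow> bool" where
  "sorting_perm le n X \<sigma> \<longleftrightarrow>
     bij_betw \<sigma> {1..n} {1..n} \<and>
     (\<forall>i j. 1 \<le> i \<and> i \<le> j \<and> j \<le> n \<longrightarrow> le (X (\<sigma> i)) (X (\<sigma> j)))"

definition sugeno_FG ::
  "(ival \<Rightarrow> ival \<Rightarrow> bool) \<Rightarrow> nat \<Rightarrow> (nat set \<Rightarrow> ival) \<Rightarrow> (ival \<Rightarrow> ival \<Rightarrow> ival)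
     \<Rightarrow> ((nat \<Rightarrow> ival) \<Rightarrow> ival) \<Rightarrow> (nat \<Rightarrow> ival) \<Rightarrow> ival" where
  "sugeno_FG le n m F G X =
     (let \<sigma> = (SOME \<sigma>. sorting_perm le n X \<sigma>)
      in G (\<lambda>i\<in>{1..n}. F (X (\<sigma> i)) (m (\<sigma> ` {i..n}))))"

end

theory Submission
  imports Defs
begin

text \<open>If \<open>X \<preceq> Y\<close> componentwise and \<open>\<sigma>\<close>, \<open>\<tau>\<close> sort \<open>X\<close> and \<open>Y\<close>, then
  \<open>X (\<sigma> i) \<preceq> Y (\<tau> i)\<close> for every \<open>i\<close>: the sets \<open>\<tau> ` {1..i}\<close> and \<open>\<sigma> ` {i..n}\<close> have
  \<open>i\<close> and \<open>n + 1 - i\<close> elements, so they share some \<open>k\<close>, and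
  \<open>X (\<sigma> i) \<preceq> X k \<preceq> Y k \<preceq> Y (\<tau> i)\<close>. By symmetry of \<open>m\<close> the weight \<open>m (\<sigma> ` {i..n})\<close>
  depends only on \<open>i\<close>, so monotonicity of \<open>F\<close> in its first argument and of \<open>G\<close> gives
  monotonicity of the functional. The boundary conditions hold because \<open>F(0,\<cdot>) = 0\<close> and
  \<open>F(1,\<cdot>) = 1\<close> send a constant input vector to itself.\<close>

lemma finite_has_greatest_wrt:
  assumes "finite A" "A \<noteq> {}"
    and total: "\<forall>x\<in>A. \<forall>y\<in>A. R x y \<or> R y x" and trans: "transp_on A R"
  shows "\<exists>g\<in>A. \<forall>x\<in>A. R x g"
proof -
  let ?less = "\<lambda>x y. R x y \<and> \<not> R y x"
  have "asymp_on A ?less"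
    by (auto intro: asymp_onI)
  moreover have "transp_on A ?less"
    using trans by (auto intro!: transp_onI dest: transp_onD)
  ultimately obtain g where "g \<in> A" "\<forall>x\<in>A. x \<noteq> g \<longrightarrow> \<not> ?less g x"
    using Finite_Set.bex_max_element[OF assms(1) _ _ assms(2)] by blast
  then show ?thesis
    using total by metis
qed

lemma exists_sorting_bij:
  assumes "finite A" and "\<forall>x\<in>A. \<forall>y\<in>A. R x y \<or> R y x" and "transp_on A R"
  shows "\<exists>\<sigma>. bij_betw \<sigma> {1..card A} A \<and> (\<forall>i j. 1 \<le> i \<and> i \<le> j \<and> j \<le> card A \<longrightarrow> R (\<sigma> i) (\<sigma> j))"
  using assms
proof (induction "card A" arbitrary: A)
  case 0
  then show ?case by (simp add: bij_betw_def)
next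
  case (Suc n)
  then obtain g where g: "g \<in> A" "\<forall>x\<in>A. R x g"
    using finite_has_greatest_wrt[of A R] by fastforce
  have "n = card (A - {g})"
    using Suc.hyps(2) g(1) by simp
  moreover have "transp_on (A - {g}) R"
    using Suc.prems(3) by (auto intro: transp_on_subset)
  ultimately obtain \<sigma> where \<sigma>: "bij_betw \<sigma> {1..n} (A - {g})"
    and sorted: "\<forall>i j. 1 \<le> i \<and> i \<le> j \<and> j \<le> n \<longrightarrow> R (\<sigma> i) (\<sigma> j)"
    using Suc.hyps(1)[of "A - {g}"] Suc.prems by auto
  define \<tau> where "\<tau> = \<sigma>(Suc n := g)"
  have "bij_betw \<tau> {1..n} (A - {g})"
    using \<sigma> by (rule bij_betw_cong[THEN iffD1, rotated]) (auto simp: \<tau>_def)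
  then have "bij_betw \<tau> ({1..n} \<union> {Suc n}) ((A - {g}) \<union> {g})"
    using notIn_Un_bij_betw3[of "Suc n" "{1..n}" \<tau> "A - {g}"] by (simp add: \<tau>_def)
  then have \<tau>_bij: "bij_betw \<tau> {1..Suc n} A"
    using g(1) by (simp add: atLeastAtMostSuc_conv insert_absorb)
  have "R (\<tau> i) (\<tau> j)" if "1 \<le> i" "i \<le> j" "j \<le> Suc n" for i j
  proof (cases "j = Suc n")
    case True
    then show ?thesis
      using g(2) bij_betw_apply[OF \<tau>_bij, of i] that by (simp add: \<tau>_def)
  next
    case False
    then show ?thesis
      using that sorted by (simp add: \<tau>_def)
  qed
  then show ?case
    using \<tau>_bij Suc.hyps(2)[symmetric] by auto
qed

lemma perm_segments_meet:
  fixes n i :: nat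
  assumes \<sigma>: "bij_betw \<sigma> {1..n} {1..n}" and \<tau>: "bij_betw \<tau> {1..n} {1..n}" and i: "i \<in> {1..n}"
  shows "\<tau> ` {1..i} \<inter> \<sigma> ` {i..n} \<noteq> {}"
proof
  assume disjoint: "\<tau> ` {1..i} \<inter> \<sigma> ` {i..n} = {}"
  have head: "{1..i} \<subseteq> {1..n}" and tail: "{i..n} \<subseteq> {1..n}"
    using i by auto
  have "card (\<tau> ` {1..i}) = i"
    using card_image[OF inj_on_subset[OF bij_betw_imp_inj_on[OF \<tau>] head]] by simp
  moreover have "card (\<sigma> ` {i..n}) = Suc n - i"
    using card_image[OF inj_on_subset[OF bij_betw_imp_inj_on[OF \<sigma>] tail]] by simp
  moreover have "card (\<tau> ` {1..i} \<union> \<sigma> ` {i..n}) = card (\<tau> ` {1..i}) + card (\<sigma> ` {i..n})"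
    using disjoint by (simp add: card_Un_disjoint)
  moreover have "\<tau> ` {1..i} \<union> \<sigma> ` {i..n} \<subseteq> {1..n}"
    using image_mono[OF head, of \<tau>] image_mono[OF tail, of \<sigma>]
      bij_betw_imp_surj_on[OF \<sigma>] bij_betw_imp_surj_on[OF \<tau>] by blast
  then have "card (\<tau> ` {1..i} \<union> \<sigma> ` {i..n}) \<le> card {1..n}"
    by (rule card_mono[OF finite_atLeastAtMost])
  ultimately show False
    using i by simp
qed

lemma sorting_perm_pointwise_mono:
  assumes \<sigma>: "sorting_perm R n X \<sigma>" and \<tau>: "sorting_perm R n Y \<tau>" and trans: "transp_on A R"
    and XA: "X ` {1..n} \<subseteq> A" and YA: "Y ` {1..n} \<subseteq> A"
    and XY: "\<forall>k\<in>{1..n}. R (X k) (Y k)" and i: "i \<in> {1..n}"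
  shows "R (X (\<sigma> i)) (Y (\<tau> i))"
proof -
  have \<sigma>_bij: "bij_betw \<sigma> {1..n} {1..n}" and \<tau>_bij: "bij_betw \<tau> {1..n} {1..n}"
    using \<sigma> \<tau> unfolding sorting_perm_def by blast+
  obtain a b where a: "a \<in> {1..i}" and b: "b \<in> {i..n}" and meet: "\<tau> a = \<sigma> b"
    using perm_segments_meet[OF \<sigma>_bij \<tau>_bij i] by blast
  have k: "\<sigma> b \<in> {1..n}" and \<sigma>i: "\<sigma> i \<in> {1..n}" and \<tau>i: "\<tau> i \<in> {1..n}"
    using bij_betw_apply[OF \<sigma>_bij] bij_betw_apply[OF \<tau>_bij] b i by auto
  have "R (X (\<sigma> i)) (X (\<sigma> b))"
    using \<sigma> b i unfolding sorting_perm_def by auto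
  moreover have "R (X (\<sigma> b)) (Y (\<sigma> b))"
    using XY k by blast
  moreover have "R (Y (\<tau> a)) (Y (\<tau> i))"
    using \<tau> a i unfolding sorting_perm_def by auto
  ultimately show ?thesis
    using transp_onD[OF trans] XA YA k \<sigma>i \<tau>i meet by (metis image_subset_iff)
qed

lemma admissible_order_total_on:
  assumes "admissible_order le" "x \<in> LI" "y \<in> LI"
  shows "le x y \<or> le y x"
  using assms unfolding admissible_order_def by blast

lemma admissible_order_transp_on:
  assumes "admissible_order le"
  shows "transp_on LI le"
  using assms unfolding admissible_order_def transp_on_def by blast

lemma ivecs_image_subset: "X \<in> ivecs n \<Longrightarrow> X ` {1..n} \<subseteq> LI"
  unfolding ivecs_def by auto

lemma admissible_order_sorting_perm_exists:
  assumes le: "admissible_order le" and X: "X \<in> ivecs n"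
  shows "\<exists>\<sigma>. sorting_perm le n X \<sigma>"
proof -
  have "\<forall>a\<in>{1..n}. \<forall>b\<in>{1..n}. le (X a) (X b) \<or> le (X b) (X a)"
    using admissible_order_total_on[OF le] ivecs_image_subset[OF X] by blast
  moreover have "transp_on {1..n} (\<lambda>a b. le (X a) (X b))"
    using admissible_order_transp_on[OF le] ivecs_image_subset[OF X]
    by (auto intro!: transp_onI dest: transp_onD)
  ultimately show ?thesis
    using exists_sorting_bij[of "{1..n}" "\<lambda>a b. le (X a) (X b)"] unfolding sorting_perm_def by simp
qed

definition FG_components ::
  "nat \<Rightarrow> (nat set \<Rightarrow> ival) \<Rightarrow> (ival \<Rightarrow> ival \<Rightarrow> ival) \<Rightarrow> (nat \<Rightarrow> ival) \<Rightarrow> (nat \<Rightarrow> nat) \<Rightarrow> nat \<Rightarrow> ival"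
  where "FG_components n m F X \<sigma> = (\<lambda>i\<in>{1..n}. F (X (\<sigma> i)) (m (\<sigma> ` {i..n})))"

lemma sugeno_FG_eq:
  "sugeno_FG le n m F G X = G (FG_components n m F X (SOME \<sigma>. sorting_perm le n X \<sigma>))"
  unfolding sugeno_FG_def FG_components_def Let_def ..

lemma bij_betw_image_tail_subset:
  fixes i n :: nat
  assumes "bij_betw \<sigma> {1..n} {1..n}" and "i \<in> {1..n}"
  shows "\<sigma> ` {i..n} \<subseteq> {1..n}"
  using bij_betw_imp_surj_on[OF assms(1)] assms(2) by auto

lemma FG_components_in_ivecs:
  assumes X: "X \<in> ivecs n" and \<sigma>: "bij_betw \<sigma> {1..n} {1..n}"
    and F: "\<forall>x\<in>LI. \<forall>y\<in>LI. F x y \<in> LI" and m: "iv_fuzzy_measure le n m"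
  shows "FG_components n m F X \<sigma> \<in> ivecs n"
proof -
  have "F (X (\<sigma> i)) (m (\<sigma> ` {i..n})) \<in> LI" if i: "i \<in> {1..n}" for i
  proof -
    have "X (\<sigma> i) \<in> LI"
      using X bij_betw_apply[OF \<sigma> i] unfolding ivecs_def by blast
    moreover have "m (\<sigma> ` {i..n}) \<in> LI"
      using m bij_betw_image_tail_subset[OF \<sigma> i] unfolding iv_fuzzy_measure_def by blast
    ultimately show ?thesis
      using F by blast
  qed
  then show ?thesis
    unfolding ivecs_def FG_components_def by simp
qed

lemma const_ivec_in_ivecs: "c \<in> LI \<Longrightarrow> const_ivec n c \<in> ivecs n"
  unfolding ivecs_def const_ivec_def by simp

lemma FG_components_const:
  assumes c: "\<forall>Y\<in>LI. F c Y = c" and \<sigma>: "bij_betw \<sigma> {1..n} {1..n}"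
    and m: "iv_fuzzy_measure le n m"
  shows "FG_components n m F (const_ivec n c) \<sigma> = const_ivec n c"
proof -
  have "F (const_ivec n c (\<sigma> i)) (m (\<sigma> ` {i..n})) = c" if i: "i \<in> {1..n}" for i
  proof -
    have "const_ivec n c (\<sigma> i) = c"
      using bij_betw_apply[OF \<sigma> i] unfolding const_ivec_def by simp
    moreover have "m (\<sigma> ` {i..n}) \<in> LI"
      using m bij_betw_image_tail_subset[OF \<sigma> i] unfolding iv_fuzzy_measure_def by blast
    ultimately show ?thesis
      using c by simp
  qed
  then show ?thesis
    unfolding FG_components_def const_ivec_def by (intro restrict_ext) simp
qed

lemma symmetric_measure_image_tail:
  assumes m: "symmetric_measure n m"
    and \<sigma>: "bij_betw \<sigma> {1..n} {1..n}" and \<tau>: "bij_betw \<tau> {1..n} {1..n}" and i: "i \<in> {1..n}"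
  shows "m (\<sigma> ` {i..n}) = m (\<tau> ` {i..n})"
proof -
  have "card (\<sigma> ` {i..n}) = card (\<tau> ` {i..n})"
    using card_image[OF inj_on_subset[OF bij_betw_imp_inj_on[OF \<sigma>]]]
      card_image[OF inj_on_subset[OF bij_betw_imp_inj_on[OF \<tau>]]] i by simp
  then show ?thesis
    using m bij_betw_image_tail_subset[OF \<sigma> i] bij_betw_image_tail_subset[OF \<tau> i]
    unfolding symmetric_measure_def by blast
qed

lemma FG_components_mono:
  assumes le: "admissible_order le" and X: "X \<in> ivecs n" and Y: "Y \<in> ivecs n"
    and XY: "\<forall>k\<in>{1..n}. le (X k) (Y k)"
    and \<sigma>: "sorting_perm le n X \<sigma>" and \<tau>: "sorting_perm le n Y \<tau>"
    and F_mono: "\<forall>x\<in>LI. \<forall>x'\<in>LI. \<forall>y\<in>LI. le x x' \<longrightarrow> le (F x y) (F x' y)"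
    and m: "iv_fuzzy_measure le n m" and m_sym: "symmetric_measure n m"
    and i: "i \<in> {1..n}"
  shows "le (FG_components n m F X \<sigma> i) (FG_components n m F Y \<tau> i)"
proof -
  have \<sigma>_bij: "bij_betw \<sigma> {1..n} {1..n}" and \<tau>_bij: "bij_betw \<tau> {1..n} {1..n}"
    using \<sigma> \<tau> unfolding sorting_perm_def by blast+
  have "le (X (\<sigma> i)) (Y (\<tau> i))"
    using sorting_perm_pointwise_mono[OF \<sigma> \<tau> admissible_order_transp_on[OF le]
        ivecs_image_subset[OF X] ivecs_image_subset[OF Y] XY i] .
  moreover have "X (\<sigma> i) \<in> LI" "Y (\<tau> i) \<in> LI"
    using ivecs_image_subset[OF X] ivecs_image_subset[OF Y]
      bij_betw_apply[OF \<sigma>_bij i] bij_betw_apply[OF \<tau>_bij i] by blast+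
  moreover have "m (\<tau> ` {i..n}) \<in> LI"
    using m bij_betw_image_tail_subset[OF \<tau>_bij i] unfolding iv_fuzzy_measure_def by blast
  ultimately show ?thesis
    using F_mono symmetric_measure_image_tail[OF m_sym \<sigma>_bij \<tau>_bij i] i
    unfolding FG_components_def by simp
qed

theorem corollary7:
  fixes le :: "ival \<Rightarrow> ival \<Rightarrow> bool" and n :: nat
    and G :: "(nat \<Rightarrow> ival) \<Rightarrow> ival" and F :: "ival \<Rightarrow> ival \<Rightarrow> ival"
    and m :: "nat set \<Rightarrow> ival"
  assumes "n \<ge> 2"
    and "admissible_order le"
    and "\<forall>X\<in>ivecs n. G X \<in> LI"
    and "\<forall>X\<in>ivecs n. \<forall>Y\<in>ivecs n. (\<forall>i\<in>{1..n}. le (X i) (Y i)) \<longrightarrow> le (G X) (G Y)"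
    and "G (const_ivec n ival0) = ival0"
    and "G (const_ivec n ival1) = ival1"
    and "\<forall>X\<in>LI. \<forall>Y\<in>LI. F X Y \<in> LI"
    and "\<forall>X\<in>LI. \<forall>X'\<in>LI. \<forall>Y\<in>LI. le X X' \<longrightarrow> le (F X Y) (F X' Y)"
    and "\<forall>Y\<in>LI. F ival0 Y = ival0"
    and "\<forall>Y\<in>LI. F ival1 Y = ival1"
    and "iv_fuzzy_measure le n m"
    and "symmetric_measure n m"
  shows "iv_aggregation le n (sugeno_FG le n m F G)"
proof -
  define \<sigma> where "\<sigma> X = (SOME \<sigma>. sorting_perm le n X \<sigma>)" for X
  have sorted: "sorting_perm le n X (\<sigma> X)" if "X \<in> ivecs n" for X
    unfolding \<sigma>_def using admissible_order_sorting_perm_exists[OF assms(2) that] by (rule someI_ex)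
  then have bij: "bij_betw (\<sigma> X) {1..n} {1..n}" if "X \<in> ivecs n" for X
    using that unfolding sorting_perm_def by blast
  have components: "FG_components n m F X (\<sigma> X) \<in> ivecs n" if "X \<in> ivecs n" for X
    using FG_components_in_ivecs[OF that bij[OF that] assms(7,11)] .
  have "FG_components n m F (const_ivec n c) (\<sigma> (const_ivec n c)) = const_ivec n c"
    if "c \<in> LI" "\<forall>Y\<in>LI. F c Y = c" for c
    using FG_components_const[of F c, OF that(2) bij[OF const_ivec_in_ivecs[OF that(1)]] assms(11)] .
  moreover have "ival0 \<in> LI" "ival1 \<in> LI"
    unfolding LI_def ival0_def ival1_def by simp_all
  moreover have "le (G (FG_components n m F X (\<sigma> X))) (G (FG_components n m F Y (\<sigma> Y)))"
    if "X \<in> ivecs n" "Y \<in> ivecs n" "\<forall>i\<in>{1..n}. le (X i) (Y i)" for X Y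
    using assms(4) components[OF that(1)] components[OF that(2)]
      FG_components_mono[OF assms(2) that sorted[OF that(1)] sorted[OF that(2)] assms(8,11,12)]
    by blast
  ultimately show ?thesis
    using assms(3,5,6,9,10) components
    unfolding iv_aggregation_def sugeno_FG_eq \<sigma>_def[symmetric] by simp
qed

end
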